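(* The variety of Gödel algebras (equivalently, Gödel–Dummett logic, with formulas identified up to logical equivalence) has unitary e-generalization type.
   Context: Gödel algebras are the algebras in the language $(\wedge,\vee,\to,0,1)$ forming the subvariety of Heyting algebras generated by totally ordered Heyting algebras; they are the equivalent algebraic semantics of Gödel–Dummett logic. For a variety $\mathsf V$: a symbolic e-generalization problem is a finite multiset $\{t_1,\dots,t_m\}$ of terms (elements of a free algebra $\mathbf F_{\mathsf V}(X)$, $X$ finite); a solution is a term $s\in\mathbf F_{\mathsf V}(Y)$ ($Y$ the variables of $s$) with substitutions (homomorphisms between free algebras) $\sigma_k$ such that $\sigma_k(s)=t_k$ for all $k$; $s\preceq u$ iff $\sigma(u)=s$ for some substitution $\sigma$. A problem has unitary type if its poset of solutions modulo $\preceq$-equivalence has a minimal complete set (pairwise incomparable elements such that every solution lies above one of them) of cardinality 1. A variety has unitary e-generalization type if every problem has unitary type. *)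

theory Defs
  imports Complex_Main
begin

datatype 'v gterm =
    GVar 'v
  | GBot
  | GTop
  | GMeet "'v gterm" "'v gterm"
  | GJoin "'v gterm" "'v gterm"
  | GImp  "'v gterm" "'v gterm"

text \<open>Totally ordered Heyting algebras (Goedel chains) are represented by a carrier
  C (a set of reals, with the real order) having a least element b and greatest
  element t; on a chain the Heyting operations are forced:
  meet = min, join = max, x imp y = (if x <= y then t else y).\<close>

definition goedel_chain :: "real set \<Rightarrow> real \<Rightarrow> real \<Rightarrow> bool" where
  "goedel_chain C b t \<longleftrightarrow> b \<in> C \<and> t \<in> C \<and> (\<forall>x\<in>C. b \<le> x \<and> x \<le> t)"

fun geval :: "real \<Rightarrow> real \<Rightarrow> ('v \<Rightarrow> real) \<Rightarrow> 'v gterm \<Rightarrow> real" where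
  "geval b t v (GVar x) = v x"
| "geval b t v GBot = b"
| "geval b t v GTop = t"
| "geval b t v (GMeet p q) = min (geval b t v p) (geval b t v q)"
| "geval b t v (GJoin p q) = max (geval b t v p) (geval b t v q)"
| "geval b t v (GImp p q) =
     (if geval b t v p \<le> geval b t v q then t else geval b t v q)"

text \<open>Equality in the free Goedel algebra: the equation holds in every totally
  ordered Heyting algebra (these generate the variety, so they have the same
  equational theory as the variety).\<close>

definition gequiv :: "nat gterm \<Rightarrow> nat gterm \<Rightarrow> bool" (infix "\<approx>\<^sub>G" 50) where
  "p \<approx>\<^sub>G q \<longleftrightarrow>
     (\<forall>C b t v. goedel_chain C b t \<longrightarrow> (\<forall>x. v x \<in> C) \<longrightarrow> geval b t v p = geval b t v q)"

fun gsubst :: "(nat \<Rightarrow> nat gterm) \<Rightarrow> nat gterm \<Rightarrow> nat gterm" where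
  "gsubst \<sigma> (GVar x) = \<sigma> x"
| "gsubst \<sigma> GBot = GBot"
| "gsubst \<sigma> GTop = GTop"
| "gsubst \<sigma> (GMeet p q) = GMeet (gsubst \<sigma> p) (gsubst \<sigma> q)"
| "gsubst \<sigma> (GJoin p q) = GJoin (gsubst \<sigma> p) (gsubst \<sigma> q)"
| "gsubst \<sigma> (GImp p q) = GImp (gsubst \<sigma> p) (gsubst \<sigma> q)"

definition gen_le :: "nat gterm \<Rightarrow> nat gterm \<Rightarrow> bool" where
  "gen_le s u \<longleftrightarrow> (\<exists>\<sigma>. gsubst \<sigma> u \<approx>\<^sub>G s)"

definition gen_solution :: "nat gterm list \<Rightarrow> nat gterm \<Rightarrow> bool" where
  "gen_solution ts s \<longleftrightarrow> (\<forall>k < length ts. \<exists>\<sigma>. gsubst \<sigma> s \<approx>\<^sub>G ts ! k)"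

definition minimal_complete_set :: "nat gterm list \<Rightarrow> nat gterm set \<Rightarrow> bool" where
  "minimal_complete_set ts M \<longleftrightarrow>
     (\<forall>m\<in>M. gen_solution ts m) \<and>
     (\<forall>u. gen_solution ts u \<longrightarrow> (\<exists>m\<in>M. gen_le m u)) \<and>
     (\<forall>m\<in>M. \<forall>m'\<in>M. m \<noteq> m' \<longrightarrow> \<not> gen_le m m')"

definition unitary_type :: "nat gterm list \<Rightarrow> bool" where
  "unitary_type ts \<longleftrightarrow> (\<exists>M. minimal_complete_set ts M \<and> card M = 1)"

end

theory Submission
  imports Defs
begin

text \<open>On a Goedel chain every negation is the top or the bottom, so
  \<open>(\<not>\<not>p \<rightarrow> a) \<and> (\<not>p \<rightarrow> c)\<close> is an if-then-else testing whether \<open>p\<close> lies above the bottom.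
  With selector variables not occurring in \<open>t\<^sub>0, \<dots>, t\<^sub>n\<^sub>-\<^sub>1\<close>, the case term
  \<open>if x\<^sub>N then t\<^sub>0 else if x\<^sub>N\<^sub>+\<^sub>1 then t\<^sub>1 else \<dots> t\<^sub>n\<^sub>-\<^sub>1\<close> is a solution: instantiating the
  selectors picks out any \<open>t\<^sub>k\<close>. It lies below every solution \<open>u\<close>, say with \<open>\<sigma>\<^sub>k(u) = t\<^sub>k\<close>:
  substitute for each variable \<open>y\<close> the case term over \<open>\<sigma>\<^sub>0(y), \<dots>, \<sigma>\<^sub>n\<^sub>-\<^sub>1(y)\<close>. Under a fixed
  valuation all these case terms select the same index \<open>j\<close>, so the result evaluates like
  \<open>\<sigma>\<^sub>j(u) = t\<^sub>j\<close>, which is also the value of the original case term.\<close>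

lemma geval_in_chain:
  assumes "goedel_chain C b t" "\<forall>x. v x \<in> C"
  shows "geval b t v p \<in> C"
  using assms by (induction p) (auto simp: goedel_chain_def min_def max_def)

lemma geval_bounds:
  assumes "goedel_chain C b t" "\<forall>x. v x \<in> C"
  shows "b \<le> geval b t v p" "geval b t v p \<le> t"
  using geval_in_chain[OF assms] assms(1) by (auto simp: goedel_chain_def)

lemma geval_trivial_chain:
  assumes "goedel_chain C b b" "\<forall>x. v x \<in> C"
  shows "geval b b v p = b"
  using geval_bounds[OF assms, of p] by linarith

lemma geval_gsubst:
  "geval b t v (gsubst \<sigma> p) = geval b t (\<lambda>x. geval b t v (\<sigma> x)) p"
  by (induction p) auto

lemma geval_cong:
  "(\<And>x. x \<in> set_gterm p \<Longrightarrow> v x = w x) \<Longrightarrow> geval b t v p = geval b t w p"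
  by (induction p) auto

lemma finite_set_gterm: "finite (set_gterm p)"
  by (induction p) auto

definition gneg :: "'v gterm \<Rightarrow> 'v gterm" where
  "gneg p = GImp p GBot"

definition gite :: "'v gterm \<Rightarrow> 'v gterm \<Rightarrow> 'v gterm \<Rightarrow> 'v gterm" where
  "gite p a c = GMeet (GImp (gneg (gneg p)) a) (GImp (gneg p) c)"

lemma geval_gite:
  assumes "goedel_chain C b t" "\<forall>x. v x \<in> C"
  shows "geval b t v (gite p a c) =
         (if b < geval b t v p then geval b t v a else geval b t v c)"
  using geval_bounds[OF assms, of p] geval_bounds[OF assms, of a] geval_bounds[OF assms, of c]
  by (auto simp: gite_def gneg_def min_def)

fun gselect :: "nat \<Rightarrow> nat gterm list \<Rightarrow> nat gterm" where
  "gselect N [] = GBot"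
| "gselect N [a] = a"
| "gselect N (a # c # rest) = gite (GVar N) a (gselect (Suc N) (c # rest))"

fun select_index :: "real \<Rightarrow> (nat \<Rightarrow> real) \<Rightarrow> nat \<Rightarrow> nat \<Rightarrow> nat" where
  "select_index b v N (Suc (Suc n)) =
     (if b < v N then 0 else Suc (select_index b v (Suc N) (Suc n)))"
| "select_index b v N _ = 0"

lemma geval_gselect:
  assumes "goedel_chain C b t" "\<forall>x. v x \<in> C" "xs \<noteq> []"
  shows "select_index b v N (length xs) < length xs \<and>
         geval b t v (gselect N xs) = geval b t v (xs ! select_index b v N (length xs))"
  using assms(3)
  by (induction N xs rule: gselect.induct) (auto simp: geval_gite[OF assms(1,2)])

lemma select_index_eq:
  assumes "\<forall>i<k. v (N + i) \<le> b" "b < v (N + k)" "k < n"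
  shows "select_index b v N n = k"
  using assms
proof (induction k arbitrary: N n)
  case 0
  then obtain m where "n = Suc m"
    using gr0_implies_Suc by blast
  with 0 show ?case
    by (cases m) auto
next
  case (Suc k)
  obtain m where n: "n = Suc (Suc m)" and k: "k < Suc m"
    using less_imp_Suc_add[OF Suc.prems(3)] by auto
  have "v N \<le> b"
    using Suc.prems(1) by (metis add_0_right zero_less_Suc)
  moreover have "\<forall>i<k. v (Suc N + i) \<le> b"
    using Suc.prems(1) by (metis Suc_less_eq add_Suc add_Suc_right)
  then have "select_index b v (Suc N) (Suc m) = k"
    using Suc.IH Suc.prems(2) k by simp
  ultimately show ?case
    using n by simp
qed

definition select_subst :: "nat \<Rightarrow> nat \<Rightarrow> nat \<Rightarrow> nat gterm" where
  "select_subst N k x =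
     (if N \<le> x \<and> x < N + k then GBot else if x = N + k then GTop else GVar x)"

lemma gen_solution_gselect:
  assumes fresh: "\<forall>p\<in>set ts. \<forall>x\<in>set_gterm p. x < N"
  shows "gen_solution ts (gselect N ts)"
  unfolding gen_solution_def
proof (intro allI impI)
  fix k assume k: "k < length ts"
  have "gsubst (select_subst N k) (gselect N ts) \<approx>\<^sub>G ts ! k"
    unfolding gequiv_def
  proof (intro allI impI)
    fix C b t and v :: "nat \<Rightarrow> real"
    assume ch: "goedel_chain C b t" and v: "\<forall>x. v x \<in> C"
    define w where "w = (\<lambda>x. geval b t v (select_subst N k x))"
    have w: "\<forall>x. w x \<in> C"
      using geval_in_chain[OF ch v] by (simp add: w_def)
    show "geval b t v (gsubst (select_subst N k) (gselect N ts)) = geval b t v (ts ! k)"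
    proof (cases "b = t")
      case True
      then show ?thesis
        using ch v geval_trivial_chain by metis
    next
      case False
      with ch have "b < t"
        unfolding goedel_chain_def by force
      then have index: "select_index b w N (length ts) = k"
        using k by (intro select_index_eq) (auto simp: w_def select_subst_def)
      have "geval b t v (gsubst (select_subst N k) (gselect N ts)) = geval b t w (gselect N ts)"
        by (simp add: geval_gsubst w_def)
      also have "\<dots> = geval b t w (ts ! k)"
        using geval_gselect[OF ch w, of ts N] k index by fastforce
      also have "\<dots> = geval b t v (ts ! k)"
        using fresh nth_mem[OF k] by (intro geval_cong) (fastforce simp: w_def select_subst_def)
      finally show ?thesis .
    qed
  qed
  then show "\<exists>\<sigma>. gsubst \<sigma> (gselect N ts) \<approx>\<^sub>G ts ! k" by blast
qed

lemma gselect_gen_le_solution: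
  assumes "ts \<noteq> []" and "gen_solution ts u"
  shows "gen_le (gselect N ts) u"
proof -
  let ?n = "length ts"
  obtain S where S: "\<And>k. k < ?n \<Longrightarrow> gsubst (S k) u \<approx>\<^sub>G ts ! k"
    using assms(2) unfolding gen_solution_def by metis
  define \<tau> where "\<tau> y = gselect N (map (\<lambda>k. S k y) [0..<?n])" for y
  have "gsubst \<tau> u \<approx>\<^sub>G gselect N ts"
    unfolding gequiv_def
  proof (intro allI impI)
    fix C b t and v :: "nat \<Rightarrow> real"
    assume ch: "goedel_chain C b t" and v: "\<forall>x. v x \<in> C"
    define j where "j = select_index b v N ?n"
    have j: "j < ?n" and \<tau>_j: "\<And>y. geval b t v (\<tau> y) = geval b t v (S j y)"
      using geval_gselect[OF ch v, of "map (\<lambda>k. S k y) [0..<?n]" N for y] assms(1)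
      by (auto simp: \<tau>_def j_def)
    have "geval b t v (gsubst \<tau> u) = geval b t v (gsubst (S j) u)"
      by (simp add: geval_gsubst \<tau>_j)
    also have "\<dots> = geval b t v (ts ! j)"
      using S[OF j] ch v unfolding gequiv_def by blast
    also have "\<dots> = geval b t v (gselect N ts)"
      using geval_gselect[OF ch v assms(1)] by (simp add: j_def)
    finally show "geval b t v (gsubst \<tau> u) = geval b t v (gselect N ts)" .
  qed
  then show ?thesis
    unfolding gen_le_def by blast
qed

theorem theorem5p3:
  fixes ts :: "nat gterm list"
  assumes "ts \<noteq> []"
  shows "unitary_type ts"
proof -
  obtain N where "\<forall>p\<in>set ts. \<forall>x\<in>set_gterm p. x < N"
    using finite_nat_set_iff_bounded[of "\<Union>p\<in>set ts. set_gterm p"] finite_set_gterm by auto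
  then have "minimal_complete_set ts {gselect N ts}"
    using gen_solution_gselect gselect_gen_le_solution[OF assms]
    unfolding minimal_complete_set_def by blast
  then show ?thesis
    unfolding unitary_type_def by (intro exI[of _ "{gselect N ts}"]) simp
qed

end
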